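(* Let $D=(V,E;s,t)$, $N$, $\mathscr{B}$ be as in the context, let $x\in\mathcal{C}(\widetilde\Gamma_D)$ and let $\phi_x$ be its potential. Then (i) for every $s$-$t$ path $P$, $x(N\cap P)=1+\sum_{(u,v)\in J_P}\big(\phi_x(u)-\phi_x(v)\big)$; (ii) for every cycle $C$, $x(N\cap C)=\sum_{(u,v)\in J_C}\big(\phi_x(u)-\phi_x(v)\big)$.
   Context: $D=(V,E;s,t)$ is a directed network with unit arc capacities (parallel arcs allowed); $N\subseteq E$ is the set of private arcs (players), $M=E\setminus N$ public arcs; every $s$-$t$ path contains an arc of $N$ and every arc lies on some $s$-$t$ path. A path is a set of arcs joining a sequence of distinct vertices along the same direction. Two paths are disjoint on $N$ if they share no arc of $N$; $\sigma_N$ is the maximum number of $s$-$t$ paths pairwise disjoint on $N$. For $S\subseteq N$, $\gamma(S)$ is the maximum number of pairwise arc-disjoint $s$-$t$ paths in $D_S=(V,S\cup M;s,t)$. Auxiliary game $\widetilde\Gamma_D=(N,\tilde\gamma)$: $\tilde\gamma(N)=\sigma_N$, $\tilde\gamma(S)=\gamma(S)$ for $S\subsetneq N$; core $\mathcal{C}(\widetilde\Gamma_D)=\{x\in\mathbb{R}^N_{\ge0}:x(N)=\sigma_N,\ x(S)\ge\tilde\gamma(S)\ \forall S\subseteq N\}$ with $x(S)=\sum_{i\in S}x_i$. Potential: $\phi_x(v)$ is the length of a shortest $s$-$v$ path when arcs $e\in N$ have length $x(e)$ and public arcs length $0$. Fix a maximum family $\mathscr{B}$ of $s$-$t$ paths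 pairwise disjoint on $N$; a $\mathscr{B}$-vertex is a vertex on a path of $\mathscr{B}$. A $u$-$v$ jump is a $u$-$v$ path whose end vertices are $\mathscr{B}$-vertices, with no intermediate $\mathscr{B}$-vertex, and which is not a single arc of a path of $\mathscr{B}$; $(u,v)$ is its jump pair. For an $s$-$t$ path or cycle $W$, cut $W$ at each of its $\mathscr{B}$-vertices into consecutive pieces (each going from a $\mathscr{B}$-vertex $u$ to the next $\mathscr{B}$-vertex $v$ along $W$); $J_W$ is the set of pairs $(u,v)$ of those pieces that are jumps, i.e. $W=P_0*Q_1*P_1*\cdots*Q_r*P_r$ with $P_i$ (possibly empty) subpaths of paths of $\mathscr{B}$, $Q_i$ jumps, and $J_W$ the jump pairs of $Q_1,\dots,Q_r$ ($J_W=\emptyset$ if $W$ is a cycle without $\mathscr{B}$-vertices). *)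

theory Defs
  imports Complex_Main
begin

text \<open>A directed multigraph is given by a set of arcs E (of type 'e) together with
  tail / head maps src, dst :: 'e => 'v.  Paths and cycles are lists of arcs.\<close>

fun walk :: "'e set \<Rightarrow> ('e \<Rightarrow> 'v) \<Rightarrow> ('e \<Rightarrow> 'v) \<Rightarrow> 'v \<Rightarrow> 'e list \<Rightarrow> 'v \<Rightarrow> bool" where
  "walk E src dst u [] v = (u = v)"
| "walk E src dst u (e # es) v = (e \<in> E \<and> src e = u \<and> walk E src dst (dst e) es v)"

definition is_path :: "'e set \<Rightarrow> ('e \<Rightarrow> 'v) \<Rightarrow> ('e \<Rightarrow> 'v) \<Rightarrow> 'v \<Rightarrow> 'e list \<Rightarrow> 'v \<Rightarrow> bool" where
  "is_path E src dst u P v \<longleftrightarrow> walk E src dst u P v \<and> distinct (u # map dst P)"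

definition st_paths :: "'e set \<Rightarrow> ('e \<Rightarrow> 'v) \<Rightarrow> ('e \<Rightarrow> 'v) \<Rightarrow> 'v \<Rightarrow> 'v \<Rightarrow> 'e list set" where
  "st_paths E src dst s t = {P. is_path E src dst s P t}"

definition is_cycle :: "'e set \<Rightarrow> ('e \<Rightarrow> 'v) \<Rightarrow> ('e \<Rightarrow> 'v) \<Rightarrow> 'e list \<Rightarrow> bool" where
  "is_cycle E src dst C \<longleftrightarrow> C \<noteq> [] \<and> walk E src dst (src (hd C)) C (src (hd C)) \<and> distinct (map dst C)"

definition disjoint_on :: "'e set \<Rightarrow> 'e list \<Rightarrow> 'e list \<Rightarrow> bool" where
  "disjoint_on N P Q \<longleftrightarrow> set P \<inter> set Q \<inter> N = {}"

definition sigmaN :: "'e set \<Rightarrow> ('e \<Rightarrow> 'v) \<Rightarrow> ('e \<Rightarrow> 'v) \<Rightarrow> 'v \<Rightarrow> 'v \<Rightarrow> 'e set \<Rightarrow> nat" where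
  "sigmaN E src dst s t N = Max {card F | F. finite F \<and> F \<subseteq> st_paths E src dst s t \<and> pairwise (disjoint_on N) F}"

definition gammaS :: "'e set \<Rightarrow> ('e \<Rightarrow> 'v) \<Rightarrow> ('e \<Rightarrow> 'v) \<Rightarrow> 'v \<Rightarrow> 'v \<Rightarrow> 'e set \<Rightarrow> 'e set \<Rightarrow> nat" where
  "gammaS E src dst s t N S = Max {card F | F. finite F \<and> F \<subseteq> st_paths (S \<union> (E - N)) src dst s t
        \<and> pairwise (\<lambda>P Q. set P \<inter> set Q = {}) F}"

definition gamma_tilde :: "'e set \<Rightarrow> ('e \<Rightarrow> 'v) \<Rightarrow> ('e \<Rightarrow> 'v) \<Rightarrow> 'v \<Rightarrow> 'v \<Rightarrow> 'e set \<Rightarrow> 'e set \<Rightarrow> nat" where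
  "gamma_tilde E src dst s t N S = (if S = N then sigmaN E src dst s t N else gammaS E src dst s t N S)"

text \<open>Core of the auxiliary game; an allocation x in R^N is a real function on arcs of which
  only the values on N matter.\<close>
definition core :: "'e set \<Rightarrow> ('e \<Rightarrow> 'v) \<Rightarrow> ('e \<Rightarrow> 'v) \<Rightarrow> 'v \<Rightarrow> 'v \<Rightarrow> 'e set \<Rightarrow> ('e \<Rightarrow> real) set" where
  "core E src dst s t N = {x. (\<forall>e\<in>N. 0 \<le> x e) \<and> sum x N = real (sigmaN E src dst s t N)
      \<and> (\<forall>S. S \<subseteq> N \<longrightarrow> real (gamma_tilde E src dst s t N S) \<le> sum x S)}"

definition potential :: "'e set \<Rightarrow> ('e \<Rightarrow> 'v) \<Rightarrow> ('e \<Rightarrow> 'v) \<Rightarrow> 'v \<Rightarrow> 'e set \<Rightarrow> ('e \<Rightarrow> real) \<Rightarrow> 'v \<Rightarrow> real" where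
  "potential E src dst s N x v = Min {(\<Sum>e\<in>set P. if e \<in> N then x e else 0) | P. is_path E src dst s P v}"

definition max_family :: "'e set \<Rightarrow> ('e \<Rightarrow> 'v) \<Rightarrow> ('e \<Rightarrow> 'v) \<Rightarrow> 'v \<Rightarrow> 'v \<Rightarrow> 'e set \<Rightarrow> 'e list set \<Rightarrow> bool" where
  "max_family E src dst s t N B \<longleftrightarrow> finite B \<and> B \<subseteq> st_paths E src dst s t \<and> pairwise (disjoint_on N) B
      \<and> card B = sigmaN E src dst s t N"

definition B_vertices :: "('e \<Rightarrow> 'v) \<Rightarrow> ('e \<Rightarrow> 'v) \<Rightarrow> 'e list set \<Rightarrow> 'v set" where
  "B_vertices src dst B = (\<Union>P\<in>B. src ` set P \<union> dst ` set P)"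

definition is_jump :: "'e set \<Rightarrow> ('e \<Rightarrow> 'v) \<Rightarrow> ('e \<Rightarrow> 'v) \<Rightarrow> 'e list set \<Rightarrow> 'v \<Rightarrow> 'e list \<Rightarrow> 'v \<Rightarrow> bool" where
  "is_jump E src dst B u Q v \<longleftrightarrow> Q \<noteq> [] \<and> is_path E src dst u Q v
     \<and> u \<in> B_vertices src dst B \<and> v \<in> B_vertices src dst B
     \<and> (\<forall>w\<in>set (butlast (map dst Q)). w \<notin> B_vertices src dst B)
     \<and> \<not> (\<exists>e. Q = [e] \<and> (\<exists>P\<in>B. e \<in> set P))"

definition J_path :: "'e set \<Rightarrow> ('e \<Rightarrow> 'v) \<Rightarrow> ('e \<Rightarrow> 'v) \<Rightarrow> 'e list set \<Rightarrow> 'e list \<Rightarrow> ('v \<times> 'v) set" where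
  "J_path E src dst B W = {(u, v). \<exists>i j. i < j \<and> j \<le> length W
       \<and> is_jump E src dst B u (take (j - i) (drop i W)) v}"

definition J_cycle :: "'e set \<Rightarrow> ('e \<Rightarrow> 'v) \<Rightarrow> ('e \<Rightarrow> 'v) \<Rightarrow> 'e list set \<Rightarrow> 'e list \<Rightarrow> ('v \<times> 'v) set" where
  "J_cycle E src dst B W = {(u, v). \<exists>n j. 0 < j \<and> j \<le> length W
       \<and> is_jump E src dst B u (take j (rotate n W)) v}"

end

theory Submission
  imports Defs
begin

(* Since x lies in the core, every s-t path P has value x(N \<inter> P) \<ge> \<gamma>~(N \<inter> P) \<ge> 1.
   Summing over the \<sigma>_N paths of B, which are disjoint on N, and comparing with x(N) = \<sigma>_N
   shows that every path of B has value exactly 1 and that x vanishes on private arcs off B.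
   Hence the potential of a vertex z on a path P of B is the value of the initial segment of P
   up to z: an s-z path of smaller value, followed by the rest of P, would contain an s-t path of
   value < 1.  So x(e) = \<phi>(dst e) - \<phi>(src e) for every arc e of B.
   Now cut a path or cycle W at its B-vertices.  A piece that is a single arc of B contributes
   \<phi>(v) - \<phi>(u); any other piece contains no arc of B, so its value 0 equals
   (\<phi>(v) - \<phi>(u)) + (\<phi>(u) - \<phi>(v)), the second term being its jump pair.
   The terms \<phi>(v) - \<phi>(u) telescope to \<phi>(t) - \<phi>(s) = 1 along an s-t path and to 0
   around a cycle. *)

section \<open>Walks and paths\<close>

lemma dst_nth_in_butlast: "m < length W - 1 \<Longrightarrow> dst (W ! m) \<in> set (butlast (map dst W))"
  by (metis length_butlast length_map map_butlast nth_butlast nth_map nth_mem)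

lemma last_notin_butlast: "distinct xs \<Longrightarrow> last xs \<notin> set (butlast xs)"
  by (cases xs rule: rev_cases) auto

lemma walk_append:
  "walk E src dst u (xs @ ys) v \<longleftrightarrow> (\<exists>w. walk E src dst u xs w \<and> walk E src dst w ys v)"
  by (induction xs arbitrary: u) auto

lemma walk_arcs_subset: "walk E src dst u W v \<Longrightarrow> set W \<subseteq> E"
  by (induction W arbitrary: u) auto

lemma walk_mono: "walk E src dst u W v \<Longrightarrow> set W \<subseteq> E' \<Longrightarrow> walk E' src dst u W v"
  by (induction W arbitrary: u) auto

lemma walk_hd_last:
  "walk E src dst u W v \<Longrightarrow> W \<noteq> [] \<Longrightarrow> src (hd W) = u \<and> dst (last W) = v"
  by (induction W arbitrary: u) auto

lemma walk_unique_end: "walk E src dst u W v \<Longrightarrow> walk E src dst u W v' \<Longrightarrow> v = v'"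
  by (induction W arbitrary: u) auto

lemma walk_src_nth:
  "walk E src dst u W v \<Longrightarrow> i < length W \<Longrightarrow> src (W ! i) = (u # map dst W) ! i"
proof (induction W arbitrary: u i)
  case (Cons e W)
  then show ?case by (cases i) auto
qed simp

lemma walk_contains_path:
  "walk E src dst u W v \<Longrightarrow> \<exists>P. is_path E src dst u P v \<and> set P \<subseteq> set W"
proof (induction W arbitrary: u)
  case Nil
  then show ?case by (auto simp: is_path_def)
next
  case (Cons e W)
  then have e: "e \<in> E" "src e = u" and w: "walk E src dst (dst e) W v" by auto
  from Cons.IH[OF w] obtain P where P: "is_path E src dst (dst e) P v" "set P \<subseteq> set W"
    by blast
  consider "u = dst e" | "u \<noteq> dst e" "u \<in> dst ` set P" | "u \<noteq> dst e" "u \<notin> dst ` set P"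
    by blast
  then show ?case
  proof cases
    case 1
    with P show ?thesis by auto
  next
    case 2
    then obtain e' P1 P2 where P12: "P = P1 @ e' # P2" and "dst e' = u"
      by (metis image_iff split_list)
    with P(1) have "is_path E src dst u P2 v"
      by (auto simp: is_path_def walk_append)
    with P(2) P12 show ?thesis by auto
  next
    case 3
    with P(1) e have "is_path E src dst u (e # P) v"
      by (auto simp: is_path_def)
    with P(2) show ?thesis by (intro exI[of _ "e # P"]) auto
  qed
qed

lemma is_path_prefix:
  "is_path E src dst u (A @ C) v \<Longrightarrow> walk E src dst u A w \<Longrightarrow> is_path E src dst u A w"
  by (auto simp: is_path_def)

lemma is_path_distinct: "is_path E src dst u P v \<Longrightarrow> distinct P"
  by (auto simp: is_path_def distinct_map)

lemma finite_st_paths: "finite E \<Longrightarrow> finite (st_paths E src dst s t)"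
proof (rule finite_subset)
  show "st_paths E src dst s t \<subseteq> {W. set W \<subseteq> E \<and> distinct W}"
    using is_path_distinct by (fastforce simp: st_paths_def is_path_def dest: walk_arcs_subset)
qed (rule finite_subset_distinct)

(* A u-v path, or a cycle through u = v. *)
definition simple_walk :: "'e set \<Rightarrow> ('e \<Rightarrow> 'v) \<Rightarrow> ('e \<Rightarrow> 'v) \<Rightarrow> 'v \<Rightarrow> 'e list \<Rightarrow> 'v \<Rightarrow> bool" where
  "simple_walk E src dst u W v \<longleftrightarrow>
     walk E src dst u W v \<and> distinct (map dst W) \<and> (u \<in> dst ` set W \<longrightarrow> u = v)"

lemma simple_walk_if_is_path: "is_path E src dst u P v \<Longrightarrow> simple_walk E src dst u P v"
  by (auto simp: is_path_def simple_walk_def)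

lemma simple_walk_suffix:
  assumes W: "simple_walk E src dst u (W1 @ W2) v" and "W1 \<noteq> []"
  shows "simple_walk E src dst (dst (last W1)) W2 v"
proof -
  obtain w where W1: "walk E src dst u W1 w" and W2: "walk E src dst w W2 v"
    using W by (auto simp: simple_walk_def walk_append)
  have "w = dst (last W1)" using walk_hd_last[OF W1 \<open>W1 \<noteq> []\<close>] by simp
  moreover have "dst (last W1) \<in> dst ` set W1" using \<open>W1 \<noteq> []\<close> by simp
  ultimately show ?thesis
    using W W2 by (auto simp: simple_walk_def)
qed

lemma simple_walk_prefix:
  assumes W: "simple_walk E src dst u (W1 @ W2) v" and "W1 \<noteq> []"
  shows "is_path E src dst u W1 (dst (last W1)) \<or> u = dst (last W1)"
proof (cases "u \<in> dst ` set W1")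
  case True
  with W have "u = v" by (auto simp: simple_walk_def)
  have W2: "walk E src dst (dst (last W1)) W2 v"
    using simple_walk_suffix[OF W \<open>W1 \<noteq> []\<close>] by (simp add: simple_walk_def)
  show ?thesis
  proof (cases "W2 = []")
    case False
    then have "v \<in> dst ` set W2" using walk_hd_last[OF W2] by auto
    with True \<open>u = v\<close> W show ?thesis by (auto simp: simple_walk_def)
  qed (use W2 \<open>u = v\<close> in simp)
next
  case False
  with W \<open>W1 \<noteq> []\<close> walk_hd_last[of E src dst u W1] show ?thesis
    by (auto simp: simple_walk_def is_path_def walk_append dest: walk_unique_end)
qed

section \<open>Jump pairs\<close>

lemma jump_vertices: "is_jump E src dst B a Q b \<Longrightarrow> a \<in> B_vertices src dst B \<and> b \<in> B_vertices src dst B"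
  by (simp add: is_jump_def)

lemma J_pathI:
  "i < j \<Longrightarrow> j \<le> length W \<Longrightarrow> is_jump E src dst B a (take (j - i) (drop i W)) b
    \<Longrightarrow> (a, b) \<in> J_path E src dst B W"
  unfolding J_path_def by blast

lemma J_path_Nil: "J_path E src dst B [] = {}"
  by (auto simp: J_path_def)

lemma J_path_subset: "J_path E src dst B W \<subseteq> src ` set W \<times> dst ` set W"
proof
  fix p assume "p \<in> J_path E src dst B W"
  then obtain a b i j where p: "p = (a, b)" and "i < j" "j \<le> length W"
    and jump: "is_jump E src dst B a (take (j - i) (drop i W)) b"
    unfolding J_path_def by blast
  define Q where "Q = take (j - i) (drop i W)"
  have "Q \<noteq> []" and Q: "walk E src dst a Q b"
    using jump by (auto simp: Q_def is_jump_def is_path_def)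
  moreover have "set Q \<subseteq> set W"
    unfolding Q_def by (meson order_trans set_drop_subset set_take_subset)
  ultimately have "hd Q \<in> set W" "last Q \<in> set W"
    by auto
  then show "p \<in> src ` set W \<times> dst ` set W"
    using walk_hd_last[OF Q \<open>Q \<noteq> []\<close>] p by auto
qed

lemma finite_J_path: "finite (J_path E src dst B W)"
  by (rule finite_subset[OF J_path_subset]) auto

lemma jump_segment:
  assumes W: "walk E src dst u W v" and ij: "i < j" "j \<le> length W"
    and jump: "is_jump E src dst B a (take (j - i) (drop i W)) b"
  shows "a = (u # map dst W) ! i" and "b = (u # map dst W) ! j"
    and "\<And>m. i < m \<Longrightarrow> m < j \<Longrightarrow> (u # map dst W) ! m \<notin> B_vertices src dst B"
proof -
  define Q where "Q = take (j - i) (drop i W)"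
  have Q: "Q \<noteq> []" "walk E src dst a Q b"
    and interior: "\<forall>z\<in>set (butlast (map dst Q)). z \<notin> B_vertices src dst B"
    using jump by (auto simp: Q_def is_jump_def is_path_def)
  have lenQ: "length Q = j - i" and nthQ: "\<And>m. m < j - i \<Longrightarrow> Q ! m = W ! (i + m)"
    using ij by (auto simp: Q_def)
  have ends: "src (hd Q) = a" "dst (last Q) = b"
    using walk_hd_last[OF Q(2,1)] by auto
  have "hd Q = W ! i"
    using nthQ[of 0] ij by (simp add: hd_conv_nth[OF Q(1)])
  then show "a = (u # map dst W) ! i"
    using walk_src_nth[OF W, of i] ij ends(1) by simp
  have "last Q = W ! (j - 1)"
    using nthQ[of "j - i - 1"] ij by (simp add: last_conv_nth[OF Q(1)] lenQ)
  then show "b = (u # map dst W) ! j"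
    using ij ends(2) by (cases j) auto
  fix m assume m: "i < m" "m < j"
  then have "(u # map dst W) ! m = dst (Q ! (m - 1 - i))"
    using nthQ[of "m - 1 - i"] ij by simp
  moreover have "dst (Q ! (m - 1 - i)) \<in> set (butlast (map dst Q))"
    using m lenQ by (intro dst_nth_in_butlast) simp
  ultimately show "(u # map dst W) ! m \<notin> B_vertices src dst B"
    using interior by simp
qed

lemma J_path_fst:
  assumes "walk E src dst u W v" and "(a, b) \<in> J_path E src dst B W"
  shows "a = u \<or> a \<in> set (butlast (map dst W))"
proof -
  obtain i j where ij: "i < j" "j \<le> length W"
    and "is_jump E src dst B a (take (j - i) (drop i W)) b"
    using assms(2) unfolding J_path_def by blast
  then have "a = (u # map dst W) ! i" using jump_segment(1)[OF assms(1)] by blast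
  show ?thesis
  proof (cases i)
    case (Suc k)
    with ij have "dst (W ! k) \<in> set (butlast (map dst W))"
      by (intro dst_nth_in_butlast) simp
    moreover have "k < length W" using Suc ij by simp
    ultimately show ?thesis using \<open>a = (u # map dst W) ! i\<close> Suc by simp
  qed (simp add: \<open>a = (u # map dst W) ! i\<close>)
qed

lemma split_first_piece:
  assumes "W \<noteq> []" and "dst (last W) \<in> S"
  shows "\<exists>W1 W2. W = W1 @ W2 \<and> W1 \<noteq> [] \<and> dst (last W1) \<in> S
           \<and> (\<forall>z\<in>set (butlast (map dst W1)). z \<notin> S)"
  using assms
proof (induction W)
  case (Cons e W)
  show ?case
  proof (cases "dst e \<in> S")
    case True
    then show ?thesis by (intro exI[of _ "[e]"] exI[of _ W]) auto
  next
    case False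
    with Cons.prems have "W \<noteq> []" by auto
    with Cons obtain W1 W2 where "W = W1 @ W2" "W1 \<noteq> []" "dst (last W1) \<in> S"
      "\<forall>z\<in>set (butlast (map dst W1)). z \<notin> S"
      by auto
    with False show ?thesis by (intro exI[of _ "e # W1"] exI[of _ W2]) auto
  qed
qed simp

lemma J_path_append_right: "J_path E src dst B W2 \<subseteq> J_path E src dst B (W1 @ W2)"
proof
  fix p assume "p \<in> J_path E src dst B W2"
  then obtain a b i j where p: "p = (a, b)" and "i < j" "j \<le> length W2"
    and "is_jump E src dst B a (take (j - i) (drop i W2)) b"
    unfolding J_path_def by blast
  then have "(a, b) \<in> J_path E src dst B (W1 @ W2)"
    by (intro J_pathI[of "length W1 + i" "length W1 + j"]) auto
  with p show "p \<in> J_path E src dst B (W1 @ W2)" by simp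
qed

lemma J_path_append_leftI:
  assumes "is_jump E src dst B a W1 b"
  shows "(a, b) \<in> J_path E src dst B (W1 @ W2)"
proof -
  have "W1 \<noteq> []" using assms by (simp add: is_jump_def)
  then show ?thesis
    using J_pathI[of 0 "length W1" "W1 @ W2" E src dst B a b] assms by simp
qed

lemma jump_segment_from_first_piece:
  assumes W: "walk E src dst u (W1 @ W2) v" and "W1 \<noteq> []"
    and w: "dst (last W1) \<in> B_vertices src dst B"
    and interior: "\<forall>z\<in>set (butlast (map dst W1)). z \<notin> B_vertices src dst B"
    and ij: "i < j" "j \<le> length (W1 @ W2)" and "i < length W1"
    and jump: "is_jump E src dst B a (take (j - i) (drop i (W1 @ W2))) b"
  shows "i = 0" and "j = length W1"
proof -
  define vs where "vs = u # map dst (W1 @ W2)"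
  have vs_interior: "vs ! m \<notin> B_vertices src dst B" if "0 < m" "m < length W1" for m
  proof -
    have "vs ! m = dst (W1 ! (m - 1))"
      using that by (cases m) (simp_all add: vs_def nth_append)
    moreover have "dst (W1 ! (m - 1)) \<in> set (butlast (map dst W1))"
      using that by (intro dst_nth_in_butlast) simp
    ultimately show ?thesis using interior by simp
  qed
  have "vs ! length W1 = dst (last W1)"
    using \<open>W1 \<noteq> []\<close> by (simp add: vs_def nth_append last_conv_nth)
  note seg = jump_segment[OF W ij jump, folded vs_def]
  show "i = 0"
    using vs_interior[of i] seg(1) jump_vertices[OF jump] \<open>i < length W1\<close> by fastforce
  have "\<not> j < length W1"
    using vs_interior[of j] seg(2) jump_vertices[OF jump] ij \<open>i = 0\<close> by auto
  moreover have "\<not> length W1 < j"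
    using seg(3)[of "length W1"] \<open>vs ! length W1 = dst (last W1)\<close> w \<open>i = 0\<close> \<open>W1 \<noteq> []\<close> by auto
  ultimately show "j = length W1" by simp
qed

lemma J_path_append_piece:
  assumes W: "walk E src dst u (W1 @ W2) v" and "W1 \<noteq> []"
    and w: "dst (last W1) \<in> B_vertices src dst B"
    and interior: "\<forall>z\<in>set (butlast (map dst W1)). z \<notin> B_vertices src dst B"
  shows "J_path E src dst B (W1 @ W2) =
           (if is_jump E src dst B u W1 (dst (last W1)) then {(u, dst (last W1))} else {})
           \<union> J_path E src dst B W2"
    (is "_ = ?first \<union> _")
proof (intro equalityI subsetI)
  fix p assume "p \<in> J_path E src dst B (W1 @ W2)"
  then obtain a b i j where p: "p = (a, b)" and ij: "i < j" "j \<le> length (W1 @ W2)"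
    and jump: "is_jump E src dst B a (take (j - i) (drop i (W1 @ W2))) b"
    unfolding J_path_def by blast
  show "p \<in> ?first \<union> J_path E src dst B W2"
  proof (cases "length W1 \<le> i")
    case True
    then have "take (j - i) (drop i (W1 @ W2))
        = take ((j - length W1) - (i - length W1)) (drop (i - length W1) W2)"
      by simp
    with True ij jump have "(a, b) \<in> J_path E src dst B W2"
      by (intro J_pathI[of "i - length W1" "j - length W1"]) auto
    with p show ?thesis by simp
  next
    case False
    then have "i = 0" "j = length W1"
      using jump_segment_from_first_piece[OF W \<open>W1 \<noteq> []\<close> w interior ij _ jump] by auto
    then have "take (j - i) (drop i (W1 @ W2)) = W1" by simp
    moreover have "a = u" "b = dst (last W1)"
      using jump_segment(1,2)[OF W ij jump] \<open>i = 0\<close> \<open>j = length W1\<close> \<open>W1 \<noteq> []\<close>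
      by (auto simp: nth_append last_conv_nth)
    ultimately show ?thesis using jump p by simp
  qed
next
  fix p assume "p \<in> ?first \<union> J_path E src dst B W2"
  then show "p \<in> J_path E src dst B (W1 @ W2)"
    using J_path_append_leftI J_path_append_right by (fastforce split: if_splits)
qed

lemma start_notin_fst_J_path_suffix:
  assumes W: "simple_walk E src dst u (W1 @ W2) v" and "W1 \<noteq> []" and "u \<noteq> dst (last W1)"
  shows "u \<notin> fst ` J_path E src dst B W2"
proof
  assume "u \<in> fst ` J_path E src dst B W2"
  have W2: "simple_walk E src dst (dst (last W1)) W2 v"
    using simple_walk_suffix[OF W \<open>W1 \<noteq> []\<close>] .
  with \<open>u \<in> fst ` J_path E src dst B W2\<close> \<open>u \<noteq> dst (last W1)\<close>
  have u_inner: "u \<in> set (butlast (map dst W2))"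
    using J_path_fst by (fastforce simp: simple_walk_def)
  then have "W2 \<noteq> []" and "u \<in> set (map dst W2)" by (auto dest: in_set_butlastD)
  then have "u \<in> dst ` set (W1 @ W2)" by auto
  with W have "u = v" by (simp add: simple_walk_def)
  also have "v = last (map dst W2)"
    using W2 walk_hd_last[of E src dst "dst (last W1)" W2 v] \<open>W2 \<noteq> []\<close>
    by (simp add: simple_walk_def last_map)
  finally show False
    using u_inner W2 by (simp add: simple_walk_def last_notin_butlast)
qed

lemma J_path_append_piece_sum:
  assumes W: "simple_walk E src dst u (W1 @ W2) v" and "W1 \<noteq> []"
    and w: "dst (last W1) \<in> B_vertices src dst B"
    and interior: "\<forall>z\<in>set (butlast (map dst W1)). z \<notin> B_vertices src dst B"
  shows "(\<Sum>(a, b)\<in>J_path E src dst B (W1 @ W2). f a b) =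
           (if is_jump E src dst B u W1 (dst (last W1)) then f u (dst (last W1)) else 0)
           + (\<Sum>(a, b)\<in>J_path E src dst B W2. f a b)"
proof -
  have walk: "walk E src dst u (W1 @ W2) v" using W by (simp add: simple_walk_def)
  have "(u, dst (last W1)) \<notin> J_path E src dst B W2"
    if "is_jump E src dst B u W1 (dst (last W1))"
  proof -
    have "u \<noteq> dst (last W1)"
      using that \<open>W1 \<noteq> []\<close> by (auto simp: is_jump_def is_path_def)
    then show ?thesis
      using start_notin_fst_J_path_suffix[OF W \<open>W1 \<noteq> []\<close>] by force
  qed
  then show ?thesis
    using J_path_append_piece[OF walk \<open>W1 \<noteq> []\<close> w interior] by (simp add: finite_J_path)
qed

lemma J_cycle_rotate:
  assumes "W \<noteq> []"
  shows "J_cycle E src dst B (rotate m W) = J_cycle E src dst B W"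
proof -
  have "rotate (n + length W * m - m) (rotate m W) = rotate n W" for n
  proof -
    have "m \<le> length W * m" using assms by (cases W) auto
    then have "n + length W * m - m + m = n + length W * m" by linarith
    then have "rotate (n + length W * m - m) (rotate m W) = rotate (n + length W * m) W"
      by (simp add: rotate_rotate)
    also have "\<dots> = rotate n W"
      by (metis mod_mult_self2 rotate_conv_mod)
    finally show ?thesis .
  qed
  then have "\<exists>n'. rotate n' (rotate m W) = rotate n W" for n
    by blast
  then show ?thesis
    unfolding J_cycle_def by (auto simp: rotate_rotate) metis
qed

lemma J_cycle_eq_J_path:
  assumes W: "walk E src dst u W u" and "W \<noteq> []" and u: "u \<in> B_vertices src dst B"
  shows "J_cycle E src dst B W = J_path E src dst B W"
proof (intro set_eqI iffI)
  fix p assume "p \<in> J_cycle E src dst B W"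
  then obtain a b n j where p: "p = (a, b)" "0 < j" "j \<le> length W"
    and jump: "is_jump E src dst B a (take j (rotate n W)) b"
    unfolding J_cycle_def by blast
  define i where "i = n mod length W"
  have "i < length W" using \<open>W \<noteq> []\<close> by (simp add: i_def)
  have rot: "rotate n W = drop i W @ take i W" by (simp add: i_def rotate_drop_take)
  show "p \<in> J_path E src dst B W"
  proof (cases "j \<le> length W - i")
    case True
    then have "take j (rotate n W) = take ((i + j) - i) (drop i W)" by (simp add: rot)
    with jump p True show ?thesis by (auto intro: J_pathI[of i "i + j"])
  next
    case False
    \<comment> \<open>the segment wraps around, so it passes through u\<close>
    define D where "D = drop i W"
    define T where "T = take (j - (length W - i)) (take i W)"
    have "D \<noteq> []" "T \<noteq> []"
      using False \<open>i < length W\<close> p(3) by (auto simp: D_def T_def)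
    moreover have "take j (rotate n W) = D @ T"
      using False by (simp add: rot D_def T_def)
    moreover have "dst (last D) = u"
      using walk_hd_last[OF W \<open>W \<noteq> []\<close>] \<open>i < length W\<close> by (simp add: D_def)
    ultimately have "u \<in> set (butlast (map dst (take j (rotate n W))))"
      by (simp add: butlast_append) (metis image_eqI last_in_set)
    with jump u show ?thesis unfolding is_jump_def by blast
  qed
next
  fix p assume "p \<in> J_path E src dst B W"
  then obtain a b i j where p: "p = (a, b)" and ij: "i < j" "j \<le> length W"
    and jump: "is_jump E src dst B a (take (j - i) (drop i W)) b"
    unfolding J_path_def by blast
  have "take (j - i) (rotate i W) = take (j - i) (drop i W)"
    using ij by (simp add: rotate_drop_take)
  with p ij jump show "p \<in> J_cycle E src dst B W"
    unfolding J_cycle_def by (intro CollectI; simp only: case_prod_conv; intro exI[of _ i] exI[of _ "j - i"]) auto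
qed

lemma J_cycle_empty:
  assumes "\<forall>e\<in>set W. src e \<notin> B_vertices src dst B"
  shows "J_cycle E src dst B W = {}"
proof -
  have False if jump: "is_jump E src dst B a (take j (rotate n W)) b" for a b n j
  proof -
    let ?Q = "take j (rotate n W)"
    have "?Q \<noteq> []" and "walk E src dst a ?Q b"
      using jump by (auto simp: is_jump_def is_path_def)
    moreover from \<open>?Q \<noteq> []\<close> have "hd ?Q \<in> set W"
      by (metis hd_in_set in_set_takeD set_rotate)
    ultimately show False
      using assms jump_vertices[OF jump] walk_hd_last by metis
  qed
  then show ?thesis by (auto simp: J_cycle_def)
qed

section \<open>Telescoping along the pieces of a walk\<close>

lemma sum_Int_set_append:
  "set A \<inter> set C = {} \<Longrightarrow> sum f (N \<inter> set (A @ C)) = sum f (N \<inter> set A) + sum f (N \<inter> set C)"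
  by (simp add: Int_Un_distrib sum.union_disjoint disjoint_iff)

lemma sum_Int_set_append_le:
  fixes f :: "'a \<Rightarrow> real"
  assumes "\<And>e. e \<in> N \<Longrightarrow> 0 \<le> f e"
  shows "sum f (N \<inter> set (A @ C)) \<le> sum f (N \<inter> set A) + sum f (N \<inter> set C)"
proof -
  have "0 \<le> sum f ((N \<inter> set A) \<inter> (N \<inter> set C))"
    using assms by (intro sum_nonneg) auto
  then show ?thesis by (simp add: Int_Un_distrib sum_Un)
qed

lemma piece_arcs_off_B:
  assumes W: "walk E src dst u W w"
    and interior: "\<forall>z\<in>set (butlast (map dst W)). z \<notin> B_vertices src dst B"
    and not_B_arc: "\<not> (\<exists>e. W = [e] \<and> (\<exists>P\<in>B. e \<in> set P))"
    and "e \<in> set W" and "P \<in> B"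
  shows "e \<notin> set P"
proof
  assume "e \<in> set P"
  with \<open>P \<in> B\<close> have ends: "src e \<in> B_vertices src dst B" "dst e \<in> B_vertices src dst B"
    by (auto simp: B_vertices_def)
  obtain m where m: "m < length W" "W ! m = e"
    using \<open>e \<in> set W\<close> by (metis in_set_conv_nth)
  have "\<not> m < length W - 1"
    using dst_nth_in_butlast[of m W dst] m(2) ends(2) interior by auto
  moreover have "m = 0"
  proof (rule ccontr)
    assume "m \<noteq> 0"
    then have "src e = dst (W ! (m - 1))"
      using walk_src_nth[OF W m(1)] m by (cases m) auto
    moreover have "dst (W ! (m - 1)) \<in> set (butlast (map dst W))"
      using m(1) \<open>m \<noteq> 0\<close> by (intro dst_nth_in_butlast) simp
    ultimately show False using ends(1) interior by simp
  qed
  ultimately have "W = [e]"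
    using m by (cases W) auto
  with not_B_arc \<open>P \<in> B\<close> \<open>e \<in> set P\<close> show False by blast
qed

locale B_potential =
  fixes x :: "'e \<Rightarrow> real" and phi :: "'v \<Rightarrow> real" and N :: "'e set"
    and src dst :: "'e \<Rightarrow> 'v" and B :: "'e list set"
  assumes B_arc: "\<And>P e. P \<in> B \<Longrightarrow> e \<in> set P \<Longrightarrow> sum x (N \<inter> {e}) = phi (dst e) - phi (src e)"
    and off_B: "\<And>e. e \<in> N \<Longrightarrow> \<forall>P\<in>B. e \<notin> set P \<Longrightarrow> x e = 0"
begin

lemma piece_value:
  assumes W: "walk E src dst u W w" "W \<noteq> []"
    and u: "u \<in> B_vertices src dst B" and w: "w \<in> B_vertices src dst B"
    and interior: "\<forall>z\<in>set (butlast (map dst W)). z \<notin> B_vertices src dst B"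
    and path_or_loop: "is_path E src dst u W w \<or> u = w"
  shows "sum x (N \<inter> set W) = phi w - phi u + (if is_jump E src dst B u W w then phi u - phi w else 0)"
proof (cases "\<exists>e. W = [e] \<and> (\<exists>P\<in>B. e \<in> set P)")
  case True
  then obtain e P where "W = [e]" "P \<in> B" "e \<in> set P" by blast
  moreover from this have "\<not> is_jump E src dst B u W w" by (auto simp: is_jump_def)
  ultimately show ?thesis using B_arc walk_hd_last[OF W] by simp
next
  case False
  have "sum x (N \<inter> set W) = 0"
    using off_B piece_arcs_off_B[OF W(1) interior False] by (intro sum.neutral) blast
  moreover have "u = w" if "\<not> is_jump E src dst B u W w"
    using that path_or_loop W(2) u w interior False by (auto simp: is_jump_def)
  ultimately show ?thesis by auto
qed

lemma walk_value_telescopes: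
  "simple_walk E src dst u W v \<Longrightarrow> u \<in> B_vertices src dst B \<Longrightarrow> v \<in> B_vertices src dst B
    \<Longrightarrow> sum x (N \<inter> set W) = phi v - phi u + (\<Sum>(a, b)\<in>J_path E src dst B W. phi a - phi b)"
proof (induction "length W" arbitrary: u W rule: less_induct)
  case less
  note W = less.prems(1) and u = less.prems(2) and v = less.prems(3)
  have walk: "walk E src dst u W v" using W by (simp add: simple_walk_def)
  show ?case
  proof (cases "W = []")
    case True
    with walk show ?thesis by (simp add: J_path_Nil)
  next
    case False
    obtain W1 W2 where W12: "W = W1 @ W2" and "W1 \<noteq> []"
      and w: "dst (last W1) \<in> B_vertices src dst B"
      and interior: "\<forall>z\<in>set (butlast (map dst W1)). z \<notin> B_vertices src dst B"
      using split_first_piece[OF False, where S = "B_vertices src dst B" and dst = dst]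
        v walk_hd_last[OF walk False]
      by auto
    define w where "w = dst (last W1)"
    have W1: "walk E src dst u W1 w"
      using walk walk_hd_last[of E src dst u W1] \<open>W1 \<noteq> []\<close>
      unfolding W12 walk_append w_def by (metis walk_unique_end)
    have W2: "simple_walk E src dst w W2 v"
      using simple_walk_suffix W \<open>W1 \<noteq> []\<close> by (simp add: W12 w_def)
    have "distinct (W1 @ W2)" using W unfolding W12 simple_walk_def by (metis distinct_map)
    then have "sum x (N \<inter> set W) = sum x (N \<inter> set W1) + sum x (N \<inter> set W2)"
      using sum_Int_set_append[of W1 W2 x N] by (simp add: W12)
    also have "sum x (N \<inter> set W1) =
        phi w - phi u + (if is_jump E src dst B u W1 w then phi u - phi w else 0)"
      using piece_value[OF W1 \<open>W1 \<noteq> []\<close> u] w interior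
        simple_walk_prefix[OF W[unfolded W12] \<open>W1 \<noteq> []\<close>]
      by (simp add: w_def)
    also have "sum x (N \<inter> set W2) = phi v - phi w + (\<Sum>(a, b)\<in>J_path E src dst B W2. phi a - phi b)"
      using less.hyps[OF _ W2] W12 \<open>W1 \<noteq> []\<close> w v by (simp add: w_def)
    also have "(\<Sum>(a, b)\<in>J_path E src dst B W2. phi a - phi b) =
        (\<Sum>(a, b)\<in>J_path E src dst B W. phi a - phi b)
        - (if is_jump E src dst B u W1 w then phi u - phi w else 0)"
      using J_path_append_piece_sum[OF W[unfolded W12] \<open>W1 \<noteq> []\<close> w interior,
          where f = "\<lambda>a b. phi a - phi b"]
      by (simp add: W12 w_def)
    finally show ?thesis by simp
  qed
qed

end

section \<open>Core allocations\<close>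

lemma Max_card_pairwise_ge_1:
  assumes "finite X" and "P \<in> X"
  shows "1 \<le> Max {card F | F. finite F \<and> F \<subseteq> X \<and> pairwise R F}"
proof -
  let ?K = "{card F | F. finite F \<and> F \<subseteq> X \<and> pairwise R F}"
  have "?K \<subseteq> card ` Pow X" by auto
  then have "finite ?K" using assms(1) by (simp add: finite_subset)
  moreover have "card {P} \<in> ?K"
    using assms(2) by (auto simp: pairwise_def intro!: exI[of _ "{P}"])
  ultimately have "card {P} \<le> Max ?K" by (rule Max_ge)
  then show ?thesis by simp
qed

lemma potential_eqI:
  assumes "finite E" and A: "is_path E src dst s A z"
    and minimal: "\<And>Q. is_path E src dst s Q z \<Longrightarrow> sum x (N \<inter> set A) \<le> sum x (N \<inter> set Q)"
  shows "potential E src dst s N x z = sum x (N \<inter> set A)"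
proof -
  have "(\<Sum>e\<in>set P. if e \<in> N then x e else 0) = sum x (N \<inter> set P)" for P
    by (simp add: sum.If_cases Int_commute)
  then have "potential E src dst s N x z = Min ((\<lambda>P. sum x (N \<inter> set P)) ` st_paths E src dst s z)"
    by (simp add: potential_def st_paths_def setcompr_eq_image)
  also have "\<dots> = sum x (N \<inter> set A)"
    using A minimal by (intro Min_eqI finite_imageI finite_st_paths \<open>finite E\<close>) (auto simp: st_paths_def)
  finally show ?thesis .
qed

locale core_allocation =
  fixes E :: "'e set" and src dst :: "'e \<Rightarrow> 'v" and s t :: 'v and N :: "'e set"
    and x :: "'e \<Rightarrow> real" and B :: "'e list set"
  assumes finite_E: "finite E" and N_subset: "N \<subseteq> E"
    and x_core: "x \<in> core E src dst s t N"
    and B_max: "max_family E src dst s t N B"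
begin

abbreviation phi :: "'v \<Rightarrow> real" where
  "phi \<equiv> potential E src dst s N x"

lemma finite_N: "finite N"
  using finite_E N_subset by (rule finite_subset[rotated])

lemma x_nonneg: "e \<in> N \<Longrightarrow> 0 \<le> x e"
  using x_core by (simp add: core_def)

lemma finite_B: "finite B" and B_st_paths: "B \<subseteq> st_paths E src dst s t"
  using B_max by (simp_all add: max_family_def)

lemma st_path_value_ge_1:
  assumes P: "P \<in> st_paths E src dst s t"
  shows "1 \<le> sum x (N \<inter> set P)"
proof -
  define S where "S = N \<inter> set P"
  have "1 \<le> gamma_tilde E src dst s t N S"
  proof (cases "S = N")
    case True
    then show ?thesis
      using Max_card_pairwise_ge_1[OF finite_st_paths[OF finite_E] P]
      by (simp add: gamma_tilde_def sigmaN_def)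
  next
    case False
    have "walk E src dst s P t" "distinct (s # map dst P)"
      using P by (auto simp: st_paths_def is_path_def)
    moreover have "set P \<subseteq> S \<union> (E - N)"
      using walk_arcs_subset[OF \<open>walk E src dst s P t\<close>] by (auto simp: S_def)
    ultimately have "P \<in> st_paths (S \<union> (E - N)) src dst s t"
      by (auto simp: st_paths_def is_path_def intro: walk_mono)
    moreover have "finite (S \<union> (E - N))"
      using finite_N finite_E by (simp add: S_def)
    then have "finite (st_paths (S \<union> (E - N)) src dst s t)" by (rule finite_st_paths)
    ultimately show ?thesis
      using False Max_card_pairwise_ge_1 by (simp add: gamma_tilde_def gammaS_def)
  qed
  also have "\<dots> \<le> sum x S"
    using x_core by (simp add: core_def S_def)
  finally show ?thesis by (simp add: S_def)
qed

lemma B_slack_sum: "(\<Sum>P\<in>B. sum x (N \<inter> set P) - 1) + sum x (N - (\<Union>P\<in>B. set P)) = 0"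
proof -
  define U where "U = (\<Union>P\<in>B. N \<inter> set P)"
  have "sum x U = (\<Sum>P\<in>B. sum x (N \<inter> set P))"
    unfolding U_def using finite_B finite_N B_max
    by (intro sum.UNION_disjoint) (auto simp: max_family_def pairwise_def disjoint_on_def)
  moreover have "sum x N = sum x U + sum x (N - U)"
    using finite_N by (metis U_def UN_least add.commute inf_le1 sum.subset_diff)
  moreover have "sum x N = card B"
    using x_core B_max by (simp add: core_def max_family_def)
  moreover have "N - U = N - (\<Union>P\<in>B. set P)" by (auto simp: U_def)
  ultimately show ?thesis by (simp add: sum_subtractf)
qed

lemma
  shows B_path_value: "P \<in> B \<Longrightarrow> sum x (N \<inter> set P) = 1"
    and x_zero_off_B: "e \<in> N \<Longrightarrow> \<forall>P\<in>B. e \<notin> set P \<Longrightarrow> x e = 0"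
proof -
  have slack: "\<forall>P\<in>B. 0 \<le> sum x (N \<inter> set P) - 1"
    using st_path_value_ge_1 B_st_paths by auto
  have rest: "\<forall>e\<in>N - (\<Union>P\<in>B. set P). 0 \<le> x e"
    using x_nonneg by auto
  have "0 \<le> (\<Sum>P\<in>B. sum x (N \<inter> set P) - 1)" "0 \<le> sum x (N - (\<Union>P\<in>B. set P))"
    using slack rest by (auto intro: sum_nonneg)
  then have "(\<Sum>P\<in>B. sum x (N \<inter> set P) - 1) = 0" "sum x (N - (\<Union>P\<in>B. set P)) = 0"
    using B_slack_sum by linarith+
  then have "\<forall>P\<in>B. sum x (N \<inter> set P) - 1 = 0" "\<forall>e\<in>N - (\<Union>P\<in>B. set P). x e = 0"
    using slack rest finite_B finite_N by (subst (asm) sum_nonneg_eq_0_iff; auto)+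
  then show "P \<in> B \<Longrightarrow> sum x (N \<inter> set P) = 1"
    and "e \<in> N \<Longrightarrow> \<forall>P\<in>B. e \<notin> set P \<Longrightarrow> x e = 0"
    by auto
qed

lemma potential_on_B_path:
  assumes "A @ C \<in> B" and A: "walk E src dst s A z"
  shows "phi z = sum x (N \<inter> set A)"
proof (rule potential_eqI[OF finite_E])
  have P: "is_path E src dst s (A @ C) t"
    using assms(1) B_st_paths by (auto simp: st_paths_def)
  then show "is_path E src dst s A z" using A by (rule is_path_prefix)
  have C: "walk E src dst z C t"
    using P A by (auto simp: is_path_def walk_append dest: walk_unique_end)
  have "sum x (N \<inter> set A) + sum x (N \<inter> set C) = 1"
    using B_path_value[OF assms(1)] sum_Int_set_append[of A C x N] is_path_distinct[OF P] by simp
  fix Q assume "is_path E src dst s Q z"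
  \<comment> \<open>Q followed by the rest C of the B-path contains an s-t path, whose value is at least 1\<close>
  then have QC: "walk E src dst s (Q @ C) t" using C by (auto simp: is_path_def walk_append)
  obtain R where R: "is_path E src dst s R t" "set R \<subseteq> set (Q @ C)"
    using walk_contains_path[OF QC] by blast
  have "1 \<le> sum x (N \<inter> set R)"
    using R(1) by (intro st_path_value_ge_1) (simp add: st_paths_def)
  also have "\<dots> \<le> sum x (N \<inter> set (Q @ C))"
    using R(2) x_nonneg finite_N by (intro sum_mono2) auto
  also have "\<dots> \<le> sum x (N \<inter> set Q) + sum x (N \<inter> set C)"
    using x_nonneg by (rule sum_Int_set_append_le)
  finally show "sum x (N \<inter> set A) \<le> sum x (N \<inter> set Q)"
    using \<open>sum x (N \<inter> set A) + sum x (N \<inter> set C) = 1\<close> by linarith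
qed

lemma B_arc_potential:
  assumes "P \<in> B" and "e \<in> set P"
  shows "sum x (N \<inter> {e}) = phi (dst e) - phi (src e)"
proof -
  obtain A C where P: "P = A @ e # C" using split_list[OF assms(2)] by blast
  then have path: "is_path E src dst s (A @ [e] @ C) t"
    using assms(1) B_st_paths by (auto simp: st_paths_def)
  then have "distinct (A @ [e])" by (auto dest: is_path_distinct)
  from path obtain z where A: "walk E src dst s A z" and "walk E src dst z (e # C) t"
    by (auto simp: is_path_def walk_append)
  then have "z = src e" and Ae: "walk E src dst s (A @ [e]) (dst e)"
    by (auto simp: walk_append)
  have "phi (src e) = sum x (N \<inter> set A)"
    using potential_on_B_path[of A "e # C"] assms(1) P A \<open>z = src e\<close> by simp
  moreover have "phi (dst e) = sum x (N \<inter> set (A @ [e]))"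
    using potential_on_B_path[of "A @ [e]" C] assms(1) P Ae by simp
  moreover have "sum x (N \<inter> set (A @ [e])) = sum x (N \<inter> set A) + sum x (N \<inter> {e})"
    using \<open>distinct (A @ [e])\<close> sum_Int_set_append[of A "[e]" x N] by simp
  ultimately show ?thesis by simp
qed

lemma st_path_ends:
  assumes "P \<in> st_paths E src dst s t"
  shows "s \<in> B_vertices src dst B" "t \<in> B_vertices src dst B" "phi s = 0" "phi t = 1"
proof -
  have "card B \<ge> 1"
    using B_max Max_card_pairwise_ge_1[OF finite_st_paths[OF finite_E] assms]
    by (simp add: max_family_def sigmaN_def)
  then obtain P0 where "P0 \<in> B" by fastforce
  then have P0: "walk E src dst s P0 t" and "P0 \<noteq> []"
    using B_st_paths B_path_value[of P0] by (auto simp: st_paths_def is_path_def)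
  show "s \<in> B_vertices src dst B" "t \<in> B_vertices src dst B"
    using \<open>P0 \<in> B\<close> \<open>P0 \<noteq> []\<close> walk_hd_last[OF P0] unfolding B_vertices_def
    by (metis UN_I UnI1 hd_in_set image_eqI, metis UN_I UnI2 image_eqI last_in_set)
  show "phi s = 0"
    using potential_on_B_path[of "[]" P0] \<open>P0 \<in> B\<close> by simp
  show "phi t = 1"
    using potential_on_B_path[of P0 "[]"] \<open>P0 \<in> B\<close> P0 B_path_value by simp
qed

sublocale B_potential x phi N src dst B
  using B_arc_potential x_zero_off_B by unfold_locales

lemma st_path_value:
  assumes "P \<in> st_paths E src dst s t"
  shows "sum x (N \<inter> set P) = 1 + (\<Sum>(u, v)\<in>J_path E src dst B P. phi u - phi v)"
  using walk_value_telescopes[where u = s and W = P and v = t] st_path_ends[OF assms] assms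
  by (simp add: st_paths_def simple_walk_if_is_path)

lemma cycle_value:
  assumes "is_cycle E src dst C"
  shows "sum x (N \<inter> set C) = (\<Sum>(u, v)\<in>J_cycle E src dst B C. phi u - phi v)"
proof (cases "\<exists>e\<in>set C. src e \<in> B_vertices src dst B")
  case True
  \<comment> \<open>started at a B-vertex, C has the same pieces read cyclically or as a closed walk\<close>
  then obtain e C1 C2 where e: "src e \<in> B_vertices src dst B" and C: "C = C1 @ e # C2"
    by (metis split_list)
  define C' where "C' = (e # C2) @ C1"
  have "C \<noteq> []" "walk E src dst (src (hd C)) C (src (hd C))" "distinct (map dst C)"
    using assms by (auto simp: is_cycle_def)
  then have C': "walk E src dst (src e) C' (src e)"
    unfolding C'_def C by (auto simp: walk_append)
  have rot: "C' = rotate (length C1) C" by (simp add: C C'_def rotate_append)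
  have "J_cycle E src dst B C = J_cycle E src dst B C'"
    unfolding rot by (rule J_cycle_rotate[OF \<open>C \<noteq> []\<close>, symmetric])
  also have "\<dots> = J_path E src dst B C'"
    using J_cycle_eq_J_path[OF C' _ e] by (simp add: C'_def)
  moreover have "simple_walk E src dst (src e) C' (src e)" "set C' = set C"
    using C' \<open>distinct (map dst C)\<close> rot by (simp_all add: simple_walk_def rotate_map[symmetric])
  ultimately show ?thesis
    using walk_value_telescopes[where u = "src e" and W = C' and v = "src e"] e by simp
next
  case False
  then have "\<forall>P\<in>B. e \<notin> set P" if "e \<in> set C" for e
    using that by (auto simp: B_vertices_def)
  then have "sum x (N \<inter> set C) = 0"
    using x_zero_off_B by (intro sum.neutral) auto
  with False show ?thesis by (simp add: J_cycle_empty)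
qed

end

theorem lemma10:
  fixes V :: "'v set" and E :: "'e set" and src dst :: "'e \<Rightarrow> 'v"
    and s t :: 'v and N :: "'e set" and x :: "'e \<Rightarrow> real" and B :: "'e list set"
  assumes "finite V" and "finite E"
    and "\<forall>e\<in>E. src e \<in> V \<and> dst e \<in> V"
    and "s \<in> V" and "t \<in> V" and "s \<noteq> t"
    and "N \<subseteq> E"
    and "\<forall>P\<in>st_paths E src dst s t. set P \<inter> N \<noteq> {}"
    and "\<forall>e\<in>E. \<exists>P\<in>st_paths E src dst s t. e \<in> set P"
    and "x \<in> core E src dst s t N"
    and "max_family E src dst s t N B"
  shows "(\<forall>P\<in>st_paths E src dst s t.
            sum x (N \<inter> set P) = 1 + (\<Sum>(u, v)\<in>J_path E src dst B P.
               potential E src dst s N x u - potential E src dst s N x v))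
       \<and> (\<forall>C. is_cycle E src dst C \<longrightarrow>
            sum x (N \<inter> set C) = (\<Sum>(u, v)\<in>J_cycle E src dst B C.
               potential E src dst s N x u - potential E src dst s N x v))"
proof -
  interpret core_allocation E src dst s t N x B
    using assms(2,7,10,11) by unfold_locales
  show ?thesis using st_path_value cycle_value by blast
qed

end
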